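(* Let $\varphi_\rho(z)=z\log z$ for $z>0$. In the discrete setting described in the context, let $(\rho_K^{n})_{K\in\mathcal M,\,0\le n\le N}$ be positive, let $(\rho_\sigma^{n+1})_{\sigma\in\mathcal{E}_{\rm int},0\le n\le N-1}$ be face values, and let $u_{K,\sigma}^{n}$ be normal face velocities. For $\sigma=K|L\in\mathcal{E}_{\rm int}$ and $0\le n\le N-1$, let $\rho_{KL}^{n+1}$ be the number $x_{KL}$ associated with $\varphi=\varphi_\rho$, $x_K=\rho_K^{n+1}$, $x_L=\rho_L^{n+1}$, and define \[ (\delta\varphi_\rho)_\sigma^{n+1}=\varphi_\rho(\rho_K^{n+1})-\varphi_\rho(\rho_\sigma^{n+1})+\varphi_\rho'(\rho_K^{n+1})\bigl[\rho_{KL}^{n+1}-\rho_K^{n+1}\bigr]+\tfrac12\bigl[\varphi_\rho'(\rho_K^{n+1})+\varphi_\rho'(\rho_L^{n+1})\bigr]\bigl[\rho_\sigma^{n+1}-\rho_{KL}^{n+1}\bigr] \] (this quantity does not depend on the ordering of $K$ and $L$), and for $K\in\mathcal{M}$, \[ |K|\,(\delta R_m)_K^{n+1}=\sum_{\sigma\in\mathcal{E}(K)\cap\mathcal{E}_{\rm int}}|\sigma|\,(\delta\varphi_\rho)_\sigma^{n+1}u_{K,\sigma}^{n+1}. \] Assume that for every $\sigma=K|L\in\mathcal{E}_{\rm int}$ and $0\le n\le N-1$: $\rho_\sigma^{n+1}\in|\hspace{-0.12em}[\rho_K^{n+1},\rho_{KL}^{n+1}]\hspace{-0.12em}|$ if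 $u_{K,\sigma}^{n+1}\ge0$, and $\rho_\sigma^{n+1}\in|\hspace{-0.12em}[\rho_L^{n+1},\rho_{KL}^{n+1}]\hspace{-0.12em}|$ otherwise. Let $M>1$ and suppose $\rho_K^n\le M$, $1/\rho_K^n\le M$ and $|u_{K,\sigma}^n|\le M$ for all $K\in\mathcal M$, $\sigma\in\mathcal{E}(K)$, $0\le n\le N$. Let $|\varphi_\rho'|_\infty$ be the maximum of $|\varphi_\rho'|$ on $[1/M,M]$. Then \[ \|\delta R_m\|_{-1,1}\le 3\,M\,|\varphi_\rho'|_\infty\,\|\rho\|_{x,BV}\,h_{\mathcal M}. \]
   Context: Setting: $\Omega\subset\mathbb{R}^d$ bounded; $\mathcal{M}$ a regular polytopal mesh of $\Omega$ with faces $\mathcal{E}$, faces of $K$ denoted $\mathcal{E}(K)$, interior faces $\mathcal{E}_{\rm int}$; $\sigma=K|L$ denotes the interior face between $K$ and $L$; $|K|$, $|\sigma|$ are the measures; ${\boldsymbol x}_K$ is the mass center of $K$; $h_{\mathcal M}=\max_{K}{\rm diam}(K)$. Uniform time grid $t_n=n\,\delta t$, $0\le n\le N$, $t_N=T$. Normal velocities satisfy $u_{L,\sigma}^n=-u_{K,\sigma}^n$ for $\sigma=K|L$ and vanish on boundary faces. Notation $|\hspace{-0.12em}[a,b]\hspace{-0.12em}|=[\min(a,b),\max(a,b)]$. The number $x_{KL}$: for a strictly convex continuously differentiable $\varphi$ on an interval $I$ and $x_K,x_L\in I$, $x_{KL}$ is the unique real number in $|\hspace{-0.12em}[x_K,x_L]\hspace{-0.12em}|$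 with $\varphi(x_K)+\varphi'(x_K)(x_{KL}-x_K)=\varphi(x_L)+\varphi'(x_L)(x_{KL}-x_L)$ if $x_K\ne x_L$, and $x_{KL}=x_K=x_L$ otherwise. Norms: for a family $(z_K^n)$, $\|z\|_{x,BV}=\sum_{n}\delta t\sum_{\sigma=K|L\in\mathcal{E}_{\rm int}}|\sigma|\,|z_L^n-z_K^n|$ (sum over all available time indices), and \[ \|z\|_{-1,1}=\sup_{\psi}\frac{1}{\sup_{{\boldsymbol x}\in\Omega,t\in(0,T)}|\nabla\psi({\boldsymbol x},t)|}\Bigl[\sum_{n}\delta t\sum_{K\in\mathcal M}|K|\,z_K^n\,\psi({\boldsymbol x}_K,t_n)\Bigr], \] the supremum being over $\psi\in C^\infty_c([0,T)\times\bar\Omega)$ (with nonzero gradient), and the sum over $n$ over the time indices on which $z$ is defined (here $n=1,\dots,N$). *)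

theory Defs
  imports "HOL-Analysis.Analysis"
begin

fun pderivs :: "'a::euclidean_space list \<Rightarrow> ('a \<Rightarrow> real) \<Rightarrow> 'a \<Rightarrow> real" where
  "pderivs [] f = f"
| "pderivs (b # bs) f = (\<lambda>x. deriv (\<lambda>t. pderivs bs f (x + t *\<^sub>R b)) 0)"

definition smooth_fun :: "('a::euclidean_space \<Rightarrow> real) \<Rightarrow> bool" where
  "smooth_fun f \<longleftrightarrow> (\<forall>bs. set bs \<subseteq> Basis \<longrightarrow>
      continuous_on UNIV (pderivs bs f) \<and>
      (\<forall>b\<in>Basis. \<forall>x. (\<lambda>t. pderivs bs f (x + t *\<^sub>R b)) differentiable (at 0)))"

text \<open>Test functions in C_c^infinity([0,T) x closure Omega) (space variable first):
  smooth functions whose support in [0,T) x closure Omega is compact, i.e. they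
  vanish for t in [t0,T] for some t0 < T.\<close>
definition test_fun :: "'a::euclidean_space set \<Rightarrow> real \<Rightarrow> ('a \<times> real \<Rightarrow> real) \<Rightarrow> bool" where
  "test_fun \<Omega> T \<psi> \<longleftrightarrow> smooth_fun \<psi> \<and>
     (\<exists>t0<T. \<forall>x\<in>closure \<Omega>. \<forall>t\<in>{t0..T}. \<psi> (x, t) = 0)"

definition grad_x :: "('a::euclidean_space \<times> real \<Rightarrow> real) \<Rightarrow> 'a \<Rightarrow> real \<Rightarrow> 'a" where
  "grad_x \<psi> x t = (SOME D. ((\<lambda>y. \<psi> (y, t)) has_derivative (\<lambda>h. D \<bullet> h)) (at x))"

definition grad_sup :: "'a::euclidean_space set \<Rightarrow> real \<Rightarrow> ('a \<times> real \<Rightarrow> real) \<Rightarrow> real" where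
  "grad_sup \<Omega> T \<psi> = Sup {norm (grad_x \<psi> x t) | x t. x \<in> \<Omega> \<and> t \<in> {0<..<T}}"

text \<open>A polytopal mesh of Omega: cells Msh (convex polytopes with nonempty interior,
  disjoint interiors, covering closure Omega); Fc K is the set of faces of K
  (planar convex polytopes of dimension d-1 covering the boundary of K, with disjoint
  relative interiors), each face belonging to at most two cells; fmeas is the
  (d-1)-dimensional measure of the faces.\<close>
definition polytopal_mesh ::
  "'a::euclidean_space set \<Rightarrow> 'a set set \<Rightarrow> ('a set \<Rightarrow> 'a set set) \<Rightarrow> ('a set \<Rightarrow> real) \<Rightarrow> bool" where
  "polytopal_mesh \<Omega> Msh Fc fmeas \<longleftrightarrow>
     bounded \<Omega> \<and> open \<Omega> \<and> finite Msh \<and> Msh \<noteq> {} \<and>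
     (\<forall>K\<in>Msh. polytope K \<and> interior K \<noteq> {}) \<and>
     (\<forall>K\<in>Msh. \<forall>L\<in>Msh. K \<noteq> L \<longrightarrow> interior K \<inter> interior L = {}) \<and>
     \<Union>Msh = closure \<Omega> \<and>
     (\<forall>K\<in>Msh. finite (Fc K) \<and> \<Union>(Fc K) = frontier K \<and>
        (\<forall>\<sigma>\<in>Fc K. polytope \<sigma> \<and> aff_dim \<sigma> = int DIM('a) - 1 \<and> fmeas \<sigma> > 0) \<and>
        (\<forall>\<sigma>\<in>Fc K. \<forall>\<tau>\<in>Fc K. \<sigma> \<noteq> \<tau> \<longrightarrow> rel_interior \<sigma> \<inter> rel_interior \<tau> = {})) \<and>
     (\<forall>\<sigma>. card {K\<in>Msh. \<sigma> \<in> Fc K} \<le> 2)"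

definition int_faces :: "'a set set \<Rightarrow> ('a set \<Rightarrow> 'a set set) \<Rightarrow> 'a set set" where
  "int_faces Msh Fc = {\<sigma>. \<exists>K\<in>Msh. \<exists>L\<in>Msh. K \<noteq> L \<and> \<sigma> \<in> Fc K \<and> \<sigma> \<in> Fc L}"

definition other_cell :: "'a set set \<Rightarrow> ('a set \<Rightarrow> 'a set set) \<Rightarrow> 'a set \<Rightarrow> 'a set \<Rightarrow> 'a set" where
  "other_cell Msh Fc K \<sigma> = (THE L. L \<in> Msh \<and> L \<noteq> K \<and> \<sigma> \<in> Fc L)"

text \<open>A chosen cell adjacent to sigma; with other_cell this gives sigma = K|L.\<close>
definition cellA :: "'a set set \<Rightarrow> ('a set \<Rightarrow> 'a set set) \<Rightarrow> 'a set \<Rightarrow> 'a set" where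
  "cellA Msh Fc \<sigma> = (SOME K. K \<in> Msh \<and> \<sigma> \<in> Fc K)"

definition mass_center :: "'a::euclidean_space set \<Rightarrow> 'a" where
  "mass_center K = integral K (\<lambda>x. x) /\<^sub>R measure lebesgue K"

definition mesh_size :: "'a::euclidean_space set set \<Rightarrow> real" where
  "mesh_size Msh = Max (diameter ` Msh)"

text \<open>Time step dt = T/N, t_n = n dt. I is the set of time indices on which z is defined.\<close>
definition norm_BV :: "'a set set \<Rightarrow> ('a set \<Rightarrow> 'a set set) \<Rightarrow> ('a set \<Rightarrow> real) \<Rightarrow>
     real \<Rightarrow> nat \<Rightarrow> nat set \<Rightarrow> ('a set \<Rightarrow> nat \<Rightarrow> real) \<Rightarrow> real" where
  "norm_BV Msh Fc fmeas T N I z =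
     (\<Sum>n\<in>I. (T / real N) * (\<Sum>\<sigma>\<in>int_faces Msh Fc.
        fmeas \<sigma> * \<bar>z (other_cell Msh Fc (cellA Msh Fc \<sigma>) \<sigma>) n - z (cellA Msh Fc \<sigma>) n\<bar>))"

definition norm_m11 :: "'a::euclidean_space set \<Rightarrow> 'a set set \<Rightarrow> real \<Rightarrow> nat \<Rightarrow> nat set \<Rightarrow>
     ('a set \<Rightarrow> nat \<Rightarrow> real) \<Rightarrow> ereal" where
  "norm_m11 \<Omega> Msh T N I z =
     (SUP \<psi>\<in>{\<psi>. test_fun \<Omega> T \<psi> \<and> grad_sup \<Omega> T \<psi> \<noteq> 0}.
        ereal ((\<Sum>n\<in>I. (T / real N) * (\<Sum>K\<in>Msh.
            measure lebesgue K * z K n * \<psi> (mass_center K, real n * (T / real N))))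
          / grad_sup \<Omega> T \<psi>))"

definition phi_rho :: "real \<Rightarrow> real" where
  "phi_rho z = z * ln z"

definition bracket_int :: "real \<Rightarrow> real \<Rightarrow> real set" where
  "bracket_int a b = {min a b .. max a b}"

definition xKL :: "(real \<Rightarrow> real) \<Rightarrow> real \<Rightarrow> real \<Rightarrow> real" where
  "xKL \<phi> a b = (if a = b then a else
     (THE x. x \<in> bracket_int a b \<and> \<phi> a + deriv \<phi> a * (x - a) = \<phi> b + deriv \<phi> b * (x - b)))"

text \<open>(delta phi)_sigma for sigma = K|L, with rK, rL the cell values and rs the face value.\<close>
definition dphi :: "(real \<Rightarrow> real) \<Rightarrow> real \<Rightarrow> real \<Rightarrow> real \<Rightarrow> real" where
  "dphi \<phi> rK rL rs = \<phi> rK - \<phi> rs + deriv \<phi> rK * (xKL \<phi> rK rL - rK)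
      + (deriv \<phi> rK + deriv \<phi> rL) / 2 * (rs - xKL \<phi> rK rL)"

definition dRm :: "'a::euclidean_space set set \<Rightarrow> ('a set \<Rightarrow> 'a set set) \<Rightarrow> ('a set \<Rightarrow> real) \<Rightarrow>
   ('a set \<Rightarrow> nat \<Rightarrow> real) \<Rightarrow> ('a set \<Rightarrow> nat \<Rightarrow> real) \<Rightarrow> ('a set \<Rightarrow> 'a set \<Rightarrow> nat \<Rightarrow> real) \<Rightarrow>
   'a set \<Rightarrow> nat \<Rightarrow> real" where
  "dRm Msh Fc fmeas \<rho> \<rho>s u K n =
     (\<Sum>\<sigma>\<in>Fc K \<inter> int_faces Msh Fc.
        fmeas \<sigma> * dphi phi_rho (\<rho> K n) (\<rho> (other_cell Msh Fc K \<sigma>) n) (\<rho>s \<sigma> n) * u K \<sigma> n)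
     / measure lebesgue K"

end

theory Submission
  imports Defs
begin

(* For phi(z) = z ln z the tangents at a and b meet at the logarithmic mean
   x = (a - b) / (ln a - ln b). Writing (delta phi)_sigma as minus the Bregman divergence of phi
   between s and a plus (ln a - ln b)/2 (x - s), and using that the upwind face value s lies
   between a and x, gives |(delta phi)_sigma| <= (1 + ln M) |a - b| for a, b in [1/M, M];
   and 1 + ln M is the maximum of |phi'| on [1/M, M].
   Pairing delta R_m with a test function psi and regrouping the cell sums by interior faces
   (the velocities are antisymmetric) leaves, at each time, a sum over faces of
   |sigma| (delta phi)_sigma u_{K,sigma} times the jump of psi between the mass centres of K and L.
   Both centres lie within h of a common point of sigma, so the jump is at most 2 h sup |grad psi|,
   and summing in time gives the bound with 2 M (1 + ln M) <= 3 M |phi'|_inf. *)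

lemma deriv_phi_rho: "z > 0 \<Longrightarrow> deriv phi_rho z = ln z + 1"
  unfolding phi_rho_def[abs_def] by (rule DERIV_imp_deriv) (auto intro!: derivative_eq_intros)

lemma ln_le_half: "0 < (y::real) \<Longrightarrow> ln y \<le> y / 2"
  using ln_le_minus_one[of "y / 2"] ln_2_less_1 by (simp add: ln_div)

lemma log_mean_between:
  fixes a b :: real
  assumes "0 < b" "b < a"
  shows "b \<le> (a - b) / (ln a - ln b)" "(a - b) / (ln a - ln b) \<le> a"
proof -
  have l: "ln a - ln b > 0" using assms by simp
  have "ln (a / b) \<le> a / b - 1" "ln (b / a) \<le> b / a - 1"
    using assms by (intro ln_le_minus_one; simp)+
  then have "b * (ln a - ln b) \<le> a - b" "a - b \<le> a * (ln a - ln b)"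
    using assms by (simp_all add: ln_div field_simps)
  then show "b \<le> (a - b) / (ln a - ln b)" "(a - b) / (ln a - ln b) \<le> a"
    using l by (simp_all add: field_simps)
qed

lemma log_mean_in_bracket:
  fixes a b :: real
  assumes "0 < a" "0 < b" "a \<noteq> b"
  shows "(a - b) / (ln a - ln b) \<in> bracket_int a b"
proof (cases "a < b")
  case True
  moreover have "(a - b) / (ln a - ln b) = (b - a) / (ln b - ln a)"
    by (metis minus_diff_eq minus_divide_divide)
  ultimately show ?thesis using log_mean_between[of a b] assms by (simp add: bracket_int_def)
next
  case False
  then show ?thesis using log_mean_between[of b a] assms by (simp add: bracket_int_def)
qed

lemma xKL_phi_rho:
  assumes "0 < a" "0 < b" "a \<noteq> b"
  shows "xKL phi_rho a b = (a - b) / (ln a - ln b)"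
proof -
  have tangents_meet: "phi_rho a + deriv phi_rho a * (x - a) = phi_rho b + deriv phi_rho b * (x - b)
      \<longleftrightarrow> x = (a - b) / (ln a - ln b)" for x
    using assms by (simp add: deriv_phi_rho phi_rho_def field_simps)
  show ?thesis unfolding xKL_def using assms log_mean_in_bracket[OF assms]
    by (auto intro!: the_equality simp: tangents_meet)
qed

lemma xKL_phi_rho_in_bracket:
  assumes "0 < a" "0 < b"
  shows "xKL phi_rho a b \<in> bracket_int a b"
proof (cases "a = b")
  case True
  then show ?thesis by (simp add: xKL_def bracket_int_def)
next
  case False
  then show ?thesis using assms by (simp add: xKL_phi_rho log_mean_in_bracket)
qed

lemma xKL_phi_rho_commute: "0 < a \<Longrightarrow> 0 < b \<Longrightarrow> xKL phi_rho a b = xKL phi_rho b a"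
  by (cases "a = b") (simp_all add: xKL_phi_rho, metis minus_diff_eq minus_divide_divide)

lemma xKL_phi_rho_mult_ln_diff:
  "0 < a \<Longrightarrow> 0 < b \<Longrightarrow> xKL phi_rho a b * (ln a - ln b) = a - b"
  by (cases "a = b") (simp_all add: xKL_phi_rho)

lemma dphi_phi_rho_commute:
  assumes "0 < a" "0 < b"
  shows "dphi phi_rho a b s = dphi phi_rho b a s"
proof -
  have "dphi phi_rho a b s - dphi phi_rho b a s = xKL phi_rho a b * (ln a - ln b) - (a - b)"
    using assms unfolding dphi_def xKL_phi_rho_commute[OF assms]
    by (simp add: deriv_phi_rho phi_rho_def algebra_simps)
  then show ?thesis using xKL_phi_rho_mult_ln_diff[OF assms] by simp
qed

lemma xlnx_tangent_le:
  fixes p q :: real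
  assumes "0 < p" "0 < q"
  shows "p * ln p + (ln p + 1) * (q - p) \<le> q * ln q"
proof -
  have "ln (p / q) \<le> p / q - 1" using assms by (intro ln_le_minus_one) simp
  then have "q * (ln p - ln q) \<le> p - q" using assms by (simp add: ln_div field_simps)
  then show ?thesis by (simp add: algebra_simps)
qed

lemma dphi_phi_rho_split:
  assumes "0 < a" "0 < b"
  shows "dphi phi_rho a b s = (a * ln a + (ln a + 1) * (s - a) - s * ln s)
      + (ln a - ln b) / 2 * (xKL phi_rho a b - s)"
  using assms unfolding dphi_def by (simp add: deriv_phi_rho phi_rho_def field_simps)

lemma abs_dphi_phi_rho_le_max:
  assumes a: "0 < a" and b: "0 < b" and s: "s \<in> bracket_int a (xKL phi_rho a b)"
  shows "\<bar>dphi phi_rho a b s\<bar>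
    \<le> max \<bar>ln (xKL phi_rho a b) - ln a\<bar> (\<bar>ln a - ln b\<bar> / 2) * \<bar>xKL phi_rho a b - a\<bar>"
proof -
  define x where "x = xKL phi_rho a b"
  define m where "m = max \<bar>ln x - ln a\<bar> (\<bar>ln a - ln b\<bar> / 2)"
  have "x \<in> bracket_int a b" unfolding x_def using a b by (rule xKL_phi_rho_in_bracket)
  then have x0: "0 < x" using a b by (auto simp: bracket_int_def)
  have s_between: "min a x \<le> s" "s \<le> max a x" using s unfolding x_def bracket_int_def by auto
  then have s0: "0 < s" using a x0 by linarith
  have bregman: "0 \<le> s * ln s - a * ln a - (ln a + 1) * (s - a)"
      "s * ln s - a * ln a - (ln a + 1) * (s - a) \<le> (ln s - ln a) * (s - a)"
    using xlnx_tangent_le[OF a s0] xlnx_tangent_le[OF s0 a] by (simp_all add: algebra_simps)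
  have "(ln s - ln a) * (s - a) \<le> \<bar>ln x - ln a\<bar> * \<bar>s - a\<bar>"
  proof (cases "a \<le> x")
    case True
    then have "0 \<le> ln s - ln a" "ln s - ln a \<le> ln x - ln a" "0 \<le> s - a"
      using s_between a s0 x0 by auto
    then show ?thesis by (simp add: mult_right_mono)
  next
    case False
    then have "ln s - ln a \<le> 0" "ln x - ln a \<le> ln s - ln a" "s - a \<le> 0"
      using s_between a s0 x0 by auto
    moreover have "(ln s - ln a) * (s - a) = (ln a - ln s) * (a - s)" by argo
    ultimately show ?thesis using mult_right_mono[of "ln a - ln s" "ln a - ln x" "a - s"] by simp
  qed
  also have "\<dots> \<le> m * \<bar>s - a\<bar>" unfolding m_def by (intro mult_right_mono) auto
  finally have "\<bar>dphi phi_rho a b s\<bar> \<le> m * \<bar>s - a\<bar> + \<bar>(ln a - ln b) / 2 * (x - s)\<bar>"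
    using bregman unfolding dphi_phi_rho_split[OF a b] x_def[symmetric] by linarith
  also have "\<dots> = m * \<bar>s - a\<bar> + \<bar>ln a - ln b\<bar> / 2 * \<bar>x - s\<bar>" by (simp add: abs_mult)
  also have "\<dots> \<le> m * \<bar>s - a\<bar> + m * \<bar>x - s\<bar>"
    unfolding m_def by (intro add_left_mono mult_right_mono) auto
  also have "\<dots> = m * (\<bar>s - a\<bar> + \<bar>x - s\<bar>)" by (simp add: distrib_left)
  also have "\<bar>s - a\<bar> + \<bar>x - s\<bar> = \<bar>x - a\<bar>"
    using s_between by (auto simp: min_def max_def split: if_splits)
  finally show ?thesis unfolding m_def x_def .
qed

lemma ln_sub_ln_xKL_phi_rho_le:
  assumes "0 < b" "b < a"
  shows "ln a - ln (xKL phi_rho a b) \<le> (1 + (ln a - ln b)) / 2"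
proof -
  define l where "l = ln a - ln b"
  have l: "0 < l" using assms unfolding l_def by simp
  have x: "xKL phi_rho a b = (a - b) / l" unfolding l_def using assms by (simp add: xKL_phi_rho)
  have "ln (a / b) \<le> a / b - 1" using assms by (intro ln_le_minus_one) simp
  then have "b * l \<le> a - b" using assms unfolding l_def by (simp add: ln_div field_simps)
  then have "a / xKL phi_rho a b \<le> 1 + l" using assms l unfolding x by (simp add: field_simps)
  then have "ln (a / xKL phi_rho a b) \<le> ln (1 + l)" using assms l unfolding x by simp
  also have "\<dots> \<le> (1 + l) / 2" using l by (intro ln_le_half) simp
  moreover have "0 < xKL phi_rho a b" using assms l unfolding x by simp
  ultimately show ?thesis using assms unfolding l_def by (simp add: ln_div)
qed

lemma inv_interval_abs_ln_le:
  fixes M z :: real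
  assumes "1 < M" "z \<in> {1/M..M}"
  shows "0 < z" "\<bar>ln z\<bar> \<le> ln M"
proof -
  show z0: "0 < z" using assms by (auto intro: less_le_trans[of 0 "1/M"])
  then have "ln (1/M) \<le> ln z" "ln z \<le> ln M" using assms by (subst ln_le_cancel_iff; auto)+
  then show "\<bar>ln z\<bar> \<le> ln M" using assms by (simp add: ln_div)
qed

lemma abs_dphi_phi_rho_le:
  assumes M: "1 < M" and a: "a \<in> {1/M..M}" and b: "b \<in> {1/M..M}"
    and s: "s \<in> bracket_int a (xKL phi_rho a b)"
  shows "\<bar>dphi phi_rho a b s\<bar> \<le> (1 + ln M) * \<bar>a - b\<bar>"
proof -
  define x where "x = xKL phi_rho a b"
  define m where "m = max \<bar>ln x - ln a\<bar> (\<bar>ln a - ln b\<bar> / 2)"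
  have pos: "0 < a" "0 < b" using inv_interval_abs_ln_le M a b by blast+
  have x_between: "x \<in> bracket_int a b" unfolding x_def using pos by (rule xKL_phi_rho_in_bracket)
  have x0: "0 < x" using x_between pos by (auto simp: bracket_int_def)
  have "m * \<bar>x - a\<bar> \<le> (1 + ln M) * \<bar>a - b\<bar>"
    \<comment> \<open>for a < b use x (ln b - ln a) = b - a; for b < a use ln (a / x) \<le> (1 + ln (a / b)) / 2\<close>
  proof (cases "a \<le> b")
    case True
    then have "a \<le> x" "x \<le> b" using x_between by (auto simp: bracket_int_def)
    then have "m \<le> ln b - ln a" unfolding m_def using pos x0 True by auto
    then have "m * \<bar>x - a\<bar> \<le> (ln b - ln a) * (x - a)" using \<open>a \<le> x\<close> by (simp add: mult_right_mono)
    also have "\<dots> = (b - a) - a * (ln b - ln a)"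
      using xKL_phi_rho_mult_ln_diff[OF pos] unfolding x_def by (simp add: algebra_simps)
    also have "\<dots> \<le> (1 + ln M) * \<bar>a - b\<bar>"
    proof -
      have "0 \<le> a * (ln b - ln a)" "0 \<le> ln M * (b - a)" using True pos M by simp_all
      then show ?thesis using True by (simp add: algebra_simps)
    qed
    finally show ?thesis .
  next
    case False
    then have "b \<le> x" "x \<le> a" using x_between by (auto simp: bracket_int_def)
    moreover have "ln a - ln x \<le> (1 + (ln a - ln b)) / 2"
      unfolding x_def using False pos by (intro ln_sub_ln_xKL_phi_rho_le) auto
    ultimately have "m \<le> 1 + ln M"
      unfolding m_def using pos x0 inv_interval_abs_ln_le(2)[OF M a] inv_interval_abs_ln_le(2)[OF M b] by auto
    moreover have "\<bar>x - a\<bar> \<le> \<bar>a - b\<bar>" using \<open>b \<le> x\<close> \<open>x \<le> a\<close> by simp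
    ultimately show ?thesis by (intro mult_mono) (auto simp: m_def)
  qed
  then show ?thesis using abs_dphi_phi_rho_le_max[OF pos s] unfolding x_def m_def by linarith
qed

lemma abs_upwind_flux_le:
  assumes M: "1 < M" and a: "a \<in> {1/M..M}" and b: "b \<in> {1/M..M}"
    and v: "\<bar>v\<bar> \<le> M" and m: "0 \<le> m" and w: "\<bar>w\<bar> \<le> W"
    and s: "if 0 \<le> v then s \<in> bracket_int a (xKL phi_rho a b)
      else s \<in> bracket_int b (xKL phi_rho a b)"
  shows "\<bar>m * dphi phi_rho a b s * v * w\<bar> \<le> M * (1 + ln M) * W * (m * \<bar>b - a\<bar>)"
proof -
  have pos: "0 < a" "0 < b" using inv_interval_abs_ln_le M a b by blast+
  have "\<bar>dphi phi_rho a b s\<bar> \<le> (1 + ln M) * \<bar>a - b\<bar>"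
  proof (cases "0 \<le> v")
    case False
    then have "s \<in> bracket_int b (xKL phi_rho b a)" using s xKL_phi_rho_commute[OF pos] by simp
    then have "\<bar>dphi phi_rho b a s\<bar> \<le> (1 + ln M) * \<bar>b - a\<bar>"
      by (rule abs_dphi_phi_rho_le[OF M b a])
    then show ?thesis by (simp add: dphi_phi_rho_commute[OF pos] abs_minus_commute)
  qed (use s abs_dphi_phi_rho_le[OF M a b] in simp)
  then have "m * \<bar>dphi phi_rho a b s\<bar> * \<bar>v\<bar> * \<bar>w\<bar> \<le> m * ((1 + ln M) * \<bar>a - b\<bar>) * M * W"
    using m v w by (intro mult_mono mult_left_mono) auto
  then show ?thesis by (simp add: abs_mult abs_of_nonneg[OF m] abs_minus_commute algebra_simps)
qed

lemma SUP_abs_deriv_phi_rho: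
  assumes "1 < M"
  shows "(SUP z\<in>{1/M..M}. \<bar>deriv phi_rho z\<bar>) = 1 + ln M"
proof (rule cSup_eq_maximum)
  have "1 / M \<le> M" using assms less_1_mult[of M M] by (simp add: field_simps)
  then show "1 + ln M \<in> (\<lambda>z. \<bar>deriv phi_rho z\<bar>) ` {1/M..M}"
    using assms by (intro image_eqI[of _ _ M]) (auto simp: deriv_phi_rho)
next
  fix y assume "y \<in> (\<lambda>z. \<bar>deriv phi_rho z\<bar>) ` {1/M..M}"
  then obtain z where z: "z \<in> {1/M..M}" and y: "y = \<bar>deriv phi_rho z\<bar>" by blast
  then show "y \<le> 1 + ln M" using y inv_interval_abs_ln_le[OF assms z] by (simp add: deriv_phi_rho)
qed

lemma line_increment_le:
  fixes f :: "'a::real_normed_vector \<Rightarrow> real"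
  assumes deriv: "\<And>z. ((\<lambda>s. f (z + s *\<^sub>R v)) has_real_derivative P z) (at 0)"
    and bound: "\<And>t. t \<in> closed_segment 0 \<tau> \<Longrightarrow> \<bar>P (y + t *\<^sub>R v) - c\<bar> \<le> e"
  shows "\<bar>f (y + \<tau> *\<^sub>R v) - f y - \<tau> * c\<bar> \<le> e * \<bar>\<tau>\<bar>"
proof -
  define g where "g = (\<lambda>t. f (y + t *\<^sub>R v) - t * c)"
  have "((\<lambda>s. f (y + s *\<^sub>R v)) has_real_derivative P (y + t *\<^sub>R v)) (at t)" for t
  proof -
    have "((\<lambda>s. f (y + (s + t) *\<^sub>R v)) has_real_derivative P (y + t *\<^sub>R v)) (at 0)"
      using deriv[of "y + t *\<^sub>R v"] by (simp add: algebra_simps scaleR_add_left)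
    then show ?thesis using DERIV_shift[of "\<lambda>s. f (y + s *\<^sub>R v)" _ 0 t] by simp
  qed
  from DERIV_diff[OF this DERIV_cmult_right[OF DERIV_ident]]
  have "(g has_real_derivative P (y + t *\<^sub>R v) - c) (at t within closed_segment 0 \<tau>)" for t
    unfolding g_def by (simp add: has_field_derivative_at_within)
  then have "norm (g \<tau> - g 0) \<le> e * norm (\<tau> - 0)"
    using bound by (intro field_differentiable_bound[OF convex_closed_segment]) auto
  then show ?thesis unfolding g_def by simp
qed

lemma norm_sum_Basis_le:
  fixes h :: "'a::euclidean_space"
  assumes "S \<subseteq> Basis"
  shows "norm (\<Sum>b\<in>S. (h \<bullet> b) *\<^sub>R b) \<le> real (card S) * norm h"
proof -
  have "norm (\<Sum>b\<in>S. (h \<bullet> b) *\<^sub>R b) \<le> (\<Sum>b\<in>S. norm ((h \<bullet> b) *\<^sub>R b))" by (rule norm_sum)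
  also have "\<dots> \<le> (\<Sum>b\<in>S. norm h)" using assms by (intro sum_mono) (auto simp: Basis_le_norm)
  finally show ?thesis by simp
qed

lemma partial_sum_increment_le:
  fixes f :: "'a::euclidean_space \<Rightarrow> real"
  assumes deriv: "\<And>b z. b \<in> Basis \<Longrightarrow> ((\<lambda>t. f (z + t *\<^sub>R b)) has_real_derivative P b z) (at 0)"
    and cont: "\<And>b. b \<in> Basis \<Longrightarrow> isCont (P b) x"
    and S: "finite S" "S \<subseteq> Basis" and e: "0 < e"
  shows "\<exists>d>0. \<forall>h. norm h < d \<longrightarrow>
    \<bar>f (x + (\<Sum>b\<in>S. (h \<bullet> b) *\<^sub>R b)) - f x - (\<Sum>b\<in>S. (h \<bullet> b) * P b x)\<bar> \<le> e * norm h"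
  using S e
proof (induction S arbitrary: e rule: finite_induct)
  case empty
  then show ?case by (auto intro: exI[of _ 1])
next
  case (insert c S)
  have c: "c \<in> Basis" and SB: "S \<subseteq> Basis" using insert.prems by auto
  obtain d1 where d1: "0 < d1" "\<And>h. norm h < d1 \<Longrightarrow>
      \<bar>f (x + (\<Sum>b\<in>S. (h \<bullet> b) *\<^sub>R b)) - f x - (\<Sum>b\<in>S. (h \<bullet> b) * P b x)\<bar> \<le> e/2 * norm h"
    using insert.IH[OF SB, of "e/2"] insert.prems by auto
  obtain dc where dc: "0 < dc" "\<And>z. dist z x < dc \<Longrightarrow> dist (P c z) (P c x) < e/2"
    using cont[OF c] insert.prems unfolding continuous_at_eps_delta by (meson half_gt_zero)
  define k where "k = real (card S) + 1"
  have k: "1 \<le> k" unfolding k_def by simp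
  show ?case
  proof (intro exI[of _ "min d1 (dc / k)"] conjI allI impI)
    show "0 < min d1 (dc / k)" using d1 dc k by simp
    fix h :: 'a assume h: "norm h < min d1 (dc / k)"
    define y where "y = x + (\<Sum>b\<in>S. (h \<bullet> b) *\<^sub>R b)"
    have "norm (y - x) + \<bar>h \<bullet> c\<bar> < dc"
      using norm_sum_Basis_le[OF SB, of h] h k Basis_le_norm[OF c, of h]
      unfolding y_def k_def by (simp add: field_simps)
    then have "\<bar>P c (y + t *\<^sub>R c) - P c x\<bar> \<le> e/2" if "t \<in> closed_segment 0 (h \<bullet> c)" for t
    proof -
      have "\<bar>t\<bar> \<le> \<bar>h \<bullet> c\<bar>" using that by (auto simp: closed_segment_eq_real_ivl split: if_splits)
      then have "dist (y + t *\<^sub>R c) x \<le> norm (y - x) + \<bar>h \<bullet> c\<bar>"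
        using norm_triangle_ineq[of "y - x" "t *\<^sub>R c"] c by (simp add: dist_norm algebra_simps)
      then have "dist (P c (y + t *\<^sub>R c)) (P c x) < e/2"
        using \<open>norm (y - x) + \<bar>h \<bullet> c\<bar> < dc\<close> by (intro dc(2)) simp
      then show ?thesis by (simp add: dist_real_def)
    qed
    from line_increment_le[OF deriv[OF c] this]
    have "\<bar>f (y + (h \<bullet> c) *\<^sub>R c) - f y - (h \<bullet> c) * P c x\<bar> \<le> e/2 * \<bar>h \<bullet> c\<bar>" .
    also have "\<dots> \<le> e/2 * norm h"
      using Basis_le_norm[OF c, of h] insert.prems by (intro mult_left_mono) auto
    finally have "\<bar>f (y + (h \<bullet> c) *\<^sub>R c) - f y - (h \<bullet> c) * P c x\<bar> \<le> e/2 * norm h" .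
    moreover have "\<bar>f y - f x - (\<Sum>b\<in>S. (h \<bullet> b) * P b x)\<bar> \<le> e/2 * norm h"
      using d1(2)[of h] h unfolding y_def by simp
    moreover have split: "x + (\<Sum>b\<in>insert c S. (h \<bullet> b) *\<^sub>R b) = y + (h \<bullet> c) *\<^sub>R c"
        "(\<Sum>b\<in>insert c S. (h \<bullet> b) * P b x) = (h \<bullet> c) * P c x + (\<Sum>b\<in>S. (h \<bullet> b) * P b x)"
      using insert.hyps unfolding y_def by (simp_all add: algebra_simps)
    ultimately show "\<bar>f (x + (\<Sum>b\<in>insert c S. (h \<bullet> b) *\<^sub>R b)) - f x
        - (\<Sum>b\<in>insert c S. (h \<bullet> b) * P b x)\<bar> \<le> e * norm h"
      unfolding split by linarith
  qed
qed

lemma has_derivative_of_partials: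
  fixes f :: "'a::euclidean_space \<Rightarrow> real"
  assumes deriv: "\<And>b z. b \<in> Basis \<Longrightarrow> ((\<lambda>t. f (z + t *\<^sub>R b)) has_real_derivative P b z) (at 0)"
    and cont: "\<And>b. b \<in> Basis \<Longrightarrow> isCont (P b) x"
  shows "(f has_derivative (\<lambda>h. \<Sum>b\<in>Basis. (h \<bullet> b) * P b x)) (at x)"
  unfolding has_derivative_at_alt
proof (intro conjI allI impI)
  show "bounded_linear (\<lambda>h. \<Sum>b\<in>Basis. (h \<bullet> b) * P b x)"
    by (intro bounded_linear_sum bounded_linear_mult_const bounded_linear_inner_left)
  fix e :: real assume "0 < e"
  from partial_sum_increment_le[OF deriv cont finite_Basis order_refl this]
  obtain d where d: "0 < d" "\<And>h. norm h < d \<Longrightarrow>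
      \<bar>f (x + h) - f x - (\<Sum>b\<in>Basis. (h \<bullet> b) * P b x)\<bar> \<le> e * norm h"
    by (auto simp: euclidean_representation)
  show "\<exists>d>0. \<forall>y. norm (y - x) < d \<longrightarrow>
      norm (f y - f x - (\<Sum>b\<in>Basis. ((y - x) \<bullet> b) * P b x)) \<le> e * norm (y - x)"
    using d(2)[of "y - x" for y] by (intro exI[of _ d] conjI allI impI d(1)) simp
qed

lemma smooth_fun_partial:
  assumes "smooth_fun f" "b \<in> Basis"
  shows "((\<lambda>t. f (z + t *\<^sub>R b)) has_real_derivative pderivs [b] f z) (at 0)"
    and "continuous_on UNIV (pderivs [b] f)"
proof -
  have "(\<lambda>t. f (z + t *\<^sub>R b)) differentiable (at 0)"
    using assms unfolding smooth_fun_def by (metis empty_subsetI empty_set pderivs.simps(1))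
  then show "((\<lambda>t. f (z + t *\<^sub>R b)) has_real_derivative pderivs [b] f z) (at 0)"
    by (simp add: DERIV_deriv_iff_real_differentiable)
  show "continuous_on UNIV (pderivs [b] f)"
    using assms unfolding smooth_fun_def
    by (metis empty_set empty_subsetI insert_subset list.simps(15))
qed

lemma sum_Basis_prod:
  fixes f :: "'a::euclidean_space \<times> 'b::euclidean_space \<Rightarrow> 'c::comm_monoid_add"
  shows "sum f Basis = (\<Sum>i\<in>Basis. f (i, 0)) + (\<Sum>i\<in>Basis. f (0, i))"
proof -
  have "inj_on (\<lambda>u. (u::'a, 0::'b)) Basis" "inj_on (\<lambda>u. (0::'a, u::'b)) Basis"
    by (auto intro!: inj_onI)
  then show ?thesis unfolding Basis_prod_def
    by (subst sum.union_disjoint) (auto simp: Basis_prod_def sum.reindex)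
qed

lemma smooth_fun_has_derivative_slice:
  fixes \<psi> :: "'a::euclidean_space \<times> real \<Rightarrow> real"
  assumes "smooth_fun \<psi>"
  shows "((\<lambda>y. \<psi> (y, t)) has_derivative
      (\<lambda>h. (\<Sum>b\<in>Basis. pderivs [(b, 0)] \<psi> (x, t) *\<^sub>R b) \<bullet> h)) (at x)"
proof -
  have "(\<psi> has_derivative (\<lambda>h. \<Sum>b\<in>Basis. (h \<bullet> b) * pderivs [b] \<psi> (x, t))) (at (x, t))"
    using smooth_fun_partial[OF assms]
    by (intro has_derivative_of_partials) (auto simp: continuous_on_eq_continuous_at)
  from has_derivative_compose
    [OF has_derivative_Pair[OF has_derivative_ident has_derivative_const] this]
  have "((\<lambda>y. \<psi> (y, t)) has_derivative
      (\<lambda>h. \<Sum>b\<in>Basis. ((h, 0) \<bullet> b) * pderivs [b] \<psi> (x, t))) (at x)"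
    by (simp add: o_def)
  moreover have "(\<Sum>b\<in>Basis. ((h, 0) \<bullet> b) * pderivs [b] \<psi> (x, t))
      = (\<Sum>b\<in>Basis. pderivs [(b, 0)] \<psi> (x, t) *\<^sub>R b) \<bullet> h" for h :: 'a
    by (subst sum_Basis_prod)
      (simp add: inner_sum_right inner_commute mult.commute del: pderivs.simps)
  ultimately show ?thesis by simp
qed

lemma grad_x_smooth:
  fixes \<psi> :: "'a::euclidean_space \<times> real \<Rightarrow> real"
  assumes "smooth_fun \<psi>"
  shows "grad_x \<psi> x t = (\<Sum>b\<in>Basis. pderivs [(b, 0)] \<psi> (x, t) *\<^sub>R b)"
proof -
  define g where "g = (\<Sum>b\<in>Basis. pderivs [(b, 0)] \<psi> (x, t) *\<^sub>R b)"
  note slice = smooth_fun_has_derivative_slice[OF assms, of t x, folded g_def]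
  have "((\<lambda>y. \<psi> (y, t)) has_derivative (\<lambda>h. grad_x \<psi> x t \<bullet> h)) (at x)"
    unfolding grad_x_def using slice by (rule someI_ex[OF exI])
  from has_derivative_unique[OF this slice]
  have "(grad_x \<psi> x t - g) \<bullet> h = 0" for h by (simp add: inner_diff_left fun_eq_iff)
  then have "grad_x \<psi> x t - g = 0" using inner_eq_zero_iff by blast
  then show ?thesis unfolding g_def by simp
qed

lemma continuous_on_grad_x:
  fixes \<psi> :: "'a::euclidean_space \<times> real \<Rightarrow> real"
  assumes "smooth_fun \<psi>"
  shows "continuous_on UNIV (\<lambda>p. grad_x \<psi> (fst p) (snd p))"
proof -
  have "continuous_on UNIV (pderivs [(b, 0)] \<psi>)" if "b \<in> Basis" for b :: 'a
    using that by (intro smooth_fun_partial(2)[OF assms]) (simp add: Basis_prod_def)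
  then show ?thesis unfolding grad_x_smooth[OF assms]
    by (intro continuous_on_sum continuous_on_scaleR continuous_on_const) auto
qed

lemma norm_grad_x_le_grad_sup:
  fixes \<psi> :: "'a::euclidean_space \<times> real \<Rightarrow> real"
  assumes sm: "smooth_fun \<psi>" and bd: "bounded \<Omega>"
    and x: "x \<in> closure \<Omega>" and t: "t \<in> {0<..<T}"
  shows "norm (grad_x \<psi> x t) \<le> grad_sup \<Omega> T \<psi>"
proof -
  let ?S = "{norm (grad_x \<psi> x t) | x t. x \<in> \<Omega> \<and> t \<in> {0<..<T}}"
  let ?F = "\<lambda>p. norm (grad_x \<psi> (fst p) (snd p))"
  have cF: "continuous_on UNIV ?F" using continuous_on_grad_x[OF sm] by (rule continuous_on_norm)
  have "compact (?F ` (closure \<Omega> \<times> {0..T}))"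
    using bd by (intro compact_continuous_image continuous_on_subset[OF cF] compact_Times) auto
  then have "bdd_above (?F ` (closure \<Omega> \<times> {0..T}))"
    by (intro bounded_imp_bdd_above compact_imp_bounded)
  moreover have "?S \<subseteq> ?F ` (closure \<Omega> \<times> {0..T})"
  proof
    fix v assume "v \<in> ?S"
    then obtain y s where "v = norm (grad_x \<psi> y s)" "y \<in> \<Omega>" "s \<in> {0<..<T}" by blast
    then show "v \<in> ?F ` (closure \<Omega> \<times> {0..T})"
      using closure_subset[of \<Omega>] by (intro image_eqI[of _ _ "(y, s)"]) auto
  qed
  ultimately have "bdd_above ?S" by (rule bdd_above_mono)
  then have inner: "norm (grad_x \<psi> y t) \<le> grad_sup \<Omega> T \<psi>" if "y \<in> \<Omega>" for y
    unfolding grad_sup_def using that t by (intro cSup_upper) auto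
  \<comment> \<open>grad_sup only ranges over \<Omega>; continuity extends the bound to its closure\<close>
  show ?thesis
  proof (rule continuous_le_on_closure[of \<Omega> "\<lambda>y. norm (grad_x \<psi> y t)"])
    have "continuous_on UNIV (\<lambda>y. ?F (y, t))"
      by (rule continuous_on_compose2[OF cF]) (auto intro!: continuous_intros)
    then show "continuous_on (closure \<Omega>) (\<lambda>y. norm (grad_x \<psi> y t))"
      by (auto intro: continuous_on_subset)
  qed (use x inner in auto)
qed

lemma grad_sup_nonneg:
  fixes \<psi> :: "'a::euclidean_space \<times> real \<Rightarrow> real"
  assumes "smooth_fun \<psi>" "bounded \<Omega>" "x \<in> closure \<Omega>" "0 < T"
  shows "0 \<le> grad_sup \<Omega> T \<psi>"
proof -
  have "norm (grad_x \<psi> x (T/2)) \<le> grad_sup \<Omega> T \<psi>"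
    using assms by (intro norm_grad_x_le_grad_sup) auto
  then show ?thesis by (meson norm_ge_zero order_trans)
qed

lemma test_fun_diff_le:
  fixes \<psi> :: "'a::euclidean_space \<times> real \<Rightarrow> real"
  assumes tf: "test_fun \<Omega> T \<psi>" and bd: "bounded \<Omega>"
    and seg: "closed_segment p q \<subseteq> closure \<Omega>" and t: "0 < t" "t \<le> T"
  shows "\<bar>\<psi> (p, t) - \<psi> (q, t)\<bar> \<le> grad_sup \<Omega> T \<psi> * norm (p - q)"
proof -
  have sm: "smooth_fun \<psi>" using tf unfolding test_fun_def by blast
  show ?thesis
  proof (cases "t = T")
    case True
    \<comment> \<open>t = T is outside the range of grad_sup, but test functions vanish near T\<close>
    obtain t0 where "t0 < T" "\<And>x t. x \<in> closure \<Omega> \<Longrightarrow> t \<in> {t0..T} \<Longrightarrow> \<psi> (x, t) = 0"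
      using tf unfolding test_fun_def by blast
    then have "\<psi> (p, t) = 0" "\<psi> (q, t) = 0" using seg True by auto
    moreover have "0 \<le> grad_sup \<Omega> T \<psi>" using seg t by (intro grad_sup_nonneg[OF sm bd, of p]) auto
    ultimately show ?thesis by simp
  next
    case False
    then have t: "t \<in> {0<..<T}" using t by simp
    have "norm ((\<lambda>y. \<psi> (y, t)) p - (\<lambda>y. \<psi> (y, t)) q) \<le> grad_sup \<Omega> T \<psi> * norm (p - q)"
    proof (rule differentiable_bound[OF convex_closed_segment])
      fix y assume y: "y \<in> closed_segment p q"
      show "((\<lambda>y. \<psi> (y, t)) has_derivative (\<lambda>h. grad_x \<psi> y t \<bullet> h)) (at y within closed_segment p q)"
        unfolding grad_x_smooth[OF sm]
        by (rule has_derivative_at_withinI[OF smooth_fun_has_derivative_slice[OF sm]])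
      have "onorm (\<lambda>h. grad_x \<psi> y t \<bullet> h) \<le> norm (grad_x \<psi> y t)"
        using onorm_inner_right[OF bounded_linear_ident, of "grad_x \<psi> y t"] by (simp add: onorm_id)
      also have "\<dots> \<le> grad_sup \<Omega> T \<psi>"
        using y seg by (intro norm_grad_x_le_grad_sup[OF sm bd _ t]) auto
      finally show "onorm (\<lambda>h. grad_x \<psi> y t \<bullet> h) \<le> grad_sup \<Omega> T \<psi>" .
    qed auto
    then show ?thesis by simp
  qed
qed

lemma measure_pos_of_interior:
  fixes K :: "'a::euclidean_space set"
  assumes "compact K" "interior K \<noteq> {}"
  shows "0 < measure lebesgue K"
proof -
  obtain c r where r: "0 < r" "ball c r \<subseteq> K"
    using assms(2) open_interior open_contains_ball interior_subset
    by (metis all_not_in_conv subset_trans)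
  have "0 < measure lborel (ball c r)" using r by (intro content_ball_pos)
  also have "measure lborel (ball c r) = measure lebesgue (ball c r)"
    by (intro measure_completion[symmetric]) auto
  also have "\<dots> \<le> measure lebesgue K"
    using r assms by (intro measure_mono_fmeasurable) (auto intro: lmeasurable_compact)
  finally show ?thesis .
qed

lemma integrable_on_id_compact:
  fixes K :: "'a::euclidean_space set"
  assumes "compact K"
  shows "(\<lambda>x. x) integrable_on K"
proof -
  have lborel: "integrable lborel (\<lambda>x. indicator K x *\<^sub>R x)"
    by (rule borel_integrable_compact[OF assms continuous_on_id])
  then have "integrable lebesgue (\<lambda>x. indicator K x *\<^sub>R x)"
    using integrable_completion[OF borel_measurable_integrable[OF lborel]] by simp
  then have "(\<lambda>x. indicator K x *\<^sub>R x) integrable_on UNIV" by (rule integrable_on_lebesgue)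
  moreover have "(\<lambda>x. indicator K x *\<^sub>R x) = (\<lambda>x. if x \<in> K then x else 0)"
    by (auto simp: indicator_def)
  ultimately show ?thesis using integrable_restrict_UNIV by metis
qed

lemma mass_center_mem:
  fixes K :: "'a::euclidean_space set"
  assumes K: "compact K" "convex K" "interior K \<noteq> {}"
  shows "mass_center K \<in> K"
proof (rule ccontr)
  assume "mass_center K \<notin> K"
  then obtain a b where ab: "a \<bullet> mass_center K < b" "\<And>x. x \<in> K \<Longrightarrow> b < a \<bullet> x"
    using separating_hyperplane_closed_point[OF K(2) compact_imp_closed[OF K(1)]] by blast
  have mK: "0 < measure lebesgue K" using measure_pos_of_interior K(1,3) .
  have lm: "K \<in> lmeasurable" using K(1) by (rule lmeasurable_compact)
  have id: "(\<lambda>x. x) integrable_on K" using K(1) by (rule integrable_on_id_compact)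
  have "b * measure lebesgue K = integral K (\<lambda>x. b *\<^sub>R (1::real))"
    using lmeasure_integral[OF lm] by (simp only: integral_cmul) simp
  also have "\<dots> \<le> integral K (\<lambda>x. a \<bullet> x)"
    using ab(2) integrable_linear[OF id bounded_linear_inner_right[of a]] integrable_on_const[OF lm]
    by (intro integral_le) (auto simp: o_def less_imp_le)
  also have "\<dots> = (a \<bullet> mass_center K) * measure lebesgue K"
    using integral_component_eq[OF id, of a] mK
    by (simp add: mass_center_def inner_commute inner_scaleR_right)
  finally show False using ab(1) mK by simp
qed

lemma polytopal_meshD:
  fixes \<Omega> :: "'a::euclidean_space set"
  assumes "polytopal_mesh \<Omega> Msh Fc fmeas"
  shows "bounded \<Omega>" "finite Msh" "Msh \<noteq> {}"
    "K \<in> Msh \<Longrightarrow> polytope K" "K \<in> Msh \<Longrightarrow> interior K \<noteq> {}" "K \<in> Msh \<Longrightarrow> K \<subseteq> closure \<Omega>"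
    "K \<in> Msh \<Longrightarrow> finite (Fc K)" "K \<in> Msh \<Longrightarrow> \<Union>(Fc K) = frontier K"
    "K \<in> Msh \<Longrightarrow> \<sigma> \<in> Fc K \<Longrightarrow> aff_dim \<sigma> = int DIM('a) - 1"
    "K \<in> Msh \<Longrightarrow> \<sigma> \<in> Fc K \<Longrightarrow> 0 < fmeas \<sigma>"
    "card {K \<in> Msh. \<sigma> \<in> Fc K} \<le> 2"
  using assms unfolding polytopal_mesh_def by auto

lemma polytopal_mesh_cell:
  assumes mesh: "polytopal_mesh \<Omega> Msh Fc fmeas" and K: "K \<in> Msh"
  shows "compact K" "convex K" "K \<subseteq> closure \<Omega>" "0 < measure lebesgue K"
    "mass_center K \<in> K" "diameter K \<le> mesh_size Msh"
proof -
  note mesh_facts = polytopal_meshD[OF mesh]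
  show "compact K" "convex K" using mesh_facts(4)[OF K] polytope_imp_compact polytope_imp_convex by blast+
  then show "0 < measure lebesgue K" "mass_center K \<in> K"
    using mesh_facts(5)[OF K] measure_pos_of_interior mass_center_mem by blast+
  show "K \<subseteq> closure \<Omega>" "diameter K \<le> mesh_size Msh"
    using K mesh_facts(2,6) unfolding mesh_size_def by simp_all
qed

lemma mesh_size_nonneg:
  assumes mesh: "polytopal_mesh \<Omega> Msh Fc fmeas"
  shows "0 \<le> mesh_size Msh"
proof -
  obtain K where K: "K \<in> Msh" using polytopal_meshD(3)[OF mesh] by blast
  show ?thesis
    using polytopal_mesh_cell(1,6)[OF mesh K] diameter_ge_0[OF compact_imp_bounded]
    by (meson order_trans)
qed

lemma polytopal_mesh_face:
  assumes mesh: "polytopal_mesh \<Omega> Msh Fc fmeas" and K: "K \<in> Msh" and \<sigma>: "\<sigma> \<in> Fc K"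
  shows "\<sigma> \<subseteq> K" "\<sigma> \<noteq> {}" "0 < fmeas \<sigma>"
proof -
  note mesh_facts = polytopal_meshD[OF mesh]
  have "\<sigma> \<subseteq> frontier K" using mesh_facts(8)[OF K] \<sigma> by blast
  also have "frontier K \<subseteq> K"
    using polytopal_mesh_cell(1)[OF mesh K] by (simp add: compact_imp_closed frontier_subset_closed)
  finally show "\<sigma> \<subseteq> K" .
  show "\<sigma> \<noteq> {}" using mesh_facts(9)[OF K \<sigma>] DIM_positive[where 'a='a] by auto
  show "0 < fmeas \<sigma>" using mesh_facts(10)[OF K \<sigma>] .
qed

lemma finite_int_faces:
  assumes "polytopal_mesh \<Omega> Msh Fc fmeas"
  shows "finite (int_faces Msh Fc)"
proof (rule finite_subset)
  show "int_faces Msh Fc \<subseteq> \<Union> (Fc ` Msh)" unfolding int_faces_def by blast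
  show "finite (\<Union> (Fc ` Msh))" using polytopal_meshD(2,7)[OF assms] by blast
qed

lemma other_cell_eqI:
  assumes "{K \<in> Msh. \<sigma> \<in> Fc K} = {X, Y}" "X \<noteq> Y"
  shows "other_cell Msh Fc X \<sigma> = Y"
  unfolding other_cell_def using assms by (intro the_equality) (auto simp: set_eq_iff)

lemma int_face_cells:
  assumes mesh: "polytopal_mesh \<Omega> Msh Fc fmeas" and \<sigma>: "\<sigma> \<in> int_faces Msh Fc"
  defines "K \<equiv> cellA Msh Fc \<sigma>"
  defines "L \<equiv> other_cell Msh Fc K \<sigma>"
  shows "{X \<in> Msh. \<sigma> \<in> Fc X} = {K, L}" "K \<noteq> L" "other_cell Msh Fc L \<sigma> = K"
proof -
  obtain A B where AB: "A \<in> Msh" "B \<in> Msh" "A \<noteq> B" "\<sigma> \<in> Fc A" "\<sigma> \<in> Fc B"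
    using \<sigma> unfolding int_faces_def by blast
  have "finite {X \<in> Msh. \<sigma> \<in> Fc X}" using polytopal_meshD(2)[OF mesh] by simp
  moreover have "card {X \<in> Msh. \<sigma> \<in> Fc X} \<le> card {A, B}"
    using polytopal_meshD(11)[OF mesh, of \<sigma>] AB(3) by simp
  moreover have "{A, B} \<subseteq> {X \<in> Msh. \<sigma> \<in> Fc X}" using AB by auto
  ultimately have S: "{X \<in> Msh. \<sigma> \<in> Fc X} = {A, B}" by (metis card_seteq)
  have "K \<in> Msh \<and> \<sigma> \<in> Fc K" unfolding K_def cellA_def by (rule someI_ex) (use AB(1,4) in blast)
  then have "K = A \<or> K = B" using S by blast
  then obtain K' where K': "{K, K'} = {A, B}" "K \<noteq> K'"
  proof
    assume "K = A" then show thesis using that[of B] AB(3) by simp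
  next
    assume "K = B" then show thesis using that[of A] AB(3) by (simp add: insert_commute)
  qed
  then have "L = K'" unfolding L_def using S by (intro other_cell_eqI) simp_all
  then show S': "{X \<in> Msh. \<sigma> \<in> Fc X} = {K, L}" and "K \<noteq> L" using K' S by simp_all
  then show "other_cell Msh Fc L \<sigma> = K" by (intro other_cell_eqI) (simp_all add: insert_commute)
qed

lemma sum_cells_int_faces:
  assumes mesh: "polytopal_mesh \<Omega> Msh Fc fmeas"
  shows "(\<Sum>K\<in>Msh. \<Sum>\<sigma>\<in>Fc K \<inter> int_faces Msh Fc. g K \<sigma>) =
    (\<Sum>\<sigma>\<in>int_faces Msh Fc. g (cellA Msh Fc \<sigma>) \<sigma> + g (other_cell Msh Fc (cellA Msh Fc \<sigma>) \<sigma>) \<sigma>)"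
proof -
  have "(\<Sum>K\<in>Msh. \<Sum>\<sigma>\<in>Fc K \<inter> int_faces Msh Fc. g K \<sigma>)
      = (\<Sum>K\<in>Msh. \<Sum>\<sigma>\<in>{\<sigma> \<in> int_faces Msh Fc. \<sigma> \<in> Fc K}. g K \<sigma>)"
    by (intro sum.cong) auto
  also have "\<dots> = (\<Sum>\<sigma>\<in>int_faces Msh Fc. \<Sum>K | K \<in> Msh \<and> \<sigma> \<in> Fc K. g K \<sigma>)"
    using polytopal_meshD(2)[OF mesh] finite_int_faces[OF mesh] by (rule sum.swap_restrict)
  also have "\<dots> = (\<Sum>\<sigma>\<in>int_faces Msh Fc.
      g (cellA Msh Fc \<sigma>) \<sigma> + g (other_cell Msh Fc (cellA Msh Fc \<sigma>) \<sigma>) \<sigma>)"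
    using int_face_cells(1,2)[OF mesh] by (intro sum.cong) simp_all
  finally show ?thesis .
qed

definition face_flux :: "'a set set \<Rightarrow> ('a set \<Rightarrow> 'a set set) \<Rightarrow> ('a set \<Rightarrow> real) \<Rightarrow>
    ('a set \<Rightarrow> nat \<Rightarrow> real) \<Rightarrow> ('a set \<Rightarrow> nat \<Rightarrow> real) \<Rightarrow> ('a set \<Rightarrow> 'a set \<Rightarrow> nat \<Rightarrow> real) \<Rightarrow>
    ('a set \<Rightarrow> real) \<Rightarrow> 'a set \<Rightarrow> nat \<Rightarrow> real" where
  "face_flux Msh Fc fmeas \<rho> \<rho>s u \<Psi> \<sigma> n =
    (let K = cellA Msh Fc \<sigma>; L = other_cell Msh Fc K \<sigma>
     in fmeas \<sigma> * dphi phi_rho (\<rho> K n) (\<rho> L n) (\<rho>s \<sigma> n) * u K \<sigma> n * (\<Psi> K - \<Psi> L))"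

lemma sum_dRm_mult_eq:
  assumes mesh: "polytopal_mesh \<Omega> Msh Fc fmeas"
    and pos: "\<And>K. K \<in> Msh \<Longrightarrow> 0 < \<rho> K n"
    and anti: "\<And>K L \<sigma>. K \<in> Msh \<Longrightarrow> L \<in> Msh \<Longrightarrow> K \<noteq> L \<Longrightarrow> \<sigma> \<in> Fc K \<Longrightarrow> \<sigma> \<in> Fc L
        \<Longrightarrow> u L \<sigma> n = - u K \<sigma> n"
  shows "(\<Sum>K\<in>Msh. measure lebesgue K * dRm Msh Fc fmeas \<rho> \<rho>s u K n * \<Psi> K) =
    (\<Sum>\<sigma>\<in>int_faces Msh Fc. face_flux Msh Fc fmeas \<rho> \<rho>s u \<Psi> \<sigma> n)"
proof -
  define F where "F K \<sigma> = fmeas \<sigma> * dphi phi_rho (\<rho> K n) (\<rho> (other_cell Msh Fc K \<sigma>) n) (\<rho>s \<sigma> n)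
      * u K \<sigma> n * \<Psi> K" for K \<sigma>
  have "measure lebesgue K * dRm Msh Fc fmeas \<rho> \<rho>s u K n * \<Psi> K
      = (\<Sum>\<sigma>\<in>Fc K \<inter> int_faces Msh Fc. F K \<sigma>)" if "K \<in> Msh" for K
    using polytopal_mesh_cell(4)[OF mesh that] unfolding dRm_def F_def
    by (simp add: sum_distrib_right)
  then have "(\<Sum>K\<in>Msh. measure lebesgue K * dRm Msh Fc fmeas \<rho> \<rho>s u K n * \<Psi> K)
      = (\<Sum>\<sigma>\<in>int_faces Msh Fc. F (cellA Msh Fc \<sigma>) \<sigma> + F (other_cell Msh Fc (cellA Msh Fc \<sigma>) \<sigma>) \<sigma>)"
    by (simp add: sum_cells_int_faces[OF mesh])
  also have "\<dots> = (\<Sum>\<sigma>\<in>int_faces Msh Fc. face_flux Msh Fc fmeas \<rho> \<rho>s u \<Psi> \<sigma> n)"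
  proof (intro sum.cong refl)
    fix \<sigma> assume \<sigma>: "\<sigma> \<in> int_faces Msh Fc"
    let ?K = "cellA Msh Fc \<sigma>" and ?L = "other_cell Msh Fc (cellA Msh Fc \<sigma>) \<sigma>"
    have KL: "?K \<in> Msh" "?L \<in> Msh" "?K \<noteq> ?L" "\<sigma> \<in> Fc ?K" "\<sigma> \<in> Fc ?L" "other_cell Msh Fc ?L \<sigma> = ?K"
      using int_face_cells[OF mesh \<sigma>] by (auto simp: set_eq_iff)
    show "F ?K \<sigma> + F ?L \<sigma> = face_flux Msh Fc fmeas \<rho> \<rho>s u \<Psi> \<sigma> n"
      using anti[OF KL(1-5)] dphi_phi_rho_commute[OF pos[OF KL(1)] pos[OF KL(2)]]
      unfolding F_def face_flux_def Let_def KL(6) by (simp add: algebra_simps)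
  qed
  finally show ?thesis .
qed

lemma abs_face_flux_le:
  assumes mesh: "polytopal_mesh \<Omega> Msh Fc fmeas" and \<sigma>: "\<sigma> \<in> int_faces Msh Fc" and M: "1 < M"
    and \<rho>: "\<And>K. K \<in> Msh \<Longrightarrow> \<rho> K n \<in> {1/M..M}"
    and u: "\<And>K. K \<in> Msh \<Longrightarrow> \<sigma> \<in> Fc K \<Longrightarrow> \<bar>u K \<sigma> n\<bar> \<le> M"
    and upwind: "\<And>K L. K \<in> Msh \<Longrightarrow> L \<in> Msh \<Longrightarrow> K \<noteq> L \<Longrightarrow> \<sigma> \<in> Fc K \<Longrightarrow> \<sigma> \<in> Fc L \<Longrightarrow>
        if 0 \<le> u K \<sigma> n then \<rho>s \<sigma> n \<in> bracket_int (\<rho> K n) (xKL phi_rho (\<rho> K n) (\<rho> L n))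
        else \<rho>s \<sigma> n \<in> bracket_int (\<rho> L n) (xKL phi_rho (\<rho> K n) (\<rho> L n))"
    and \<Psi>: "\<And>K L. K \<in> Msh \<Longrightarrow> L \<in> Msh \<Longrightarrow> K \<inter> L \<noteq> {} \<Longrightarrow> \<bar>\<Psi> K - \<Psi> L\<bar> \<le> W"
  shows "\<bar>face_flux Msh Fc fmeas \<rho> \<rho>s u \<Psi> \<sigma> n\<bar>
    \<le> M * (1 + ln M) * W
      * (fmeas \<sigma> * \<bar>\<rho> (other_cell Msh Fc (cellA Msh Fc \<sigma>) \<sigma>) n - \<rho> (cellA Msh Fc \<sigma>) n\<bar>)"
proof -
  let ?K = "cellA Msh Fc \<sigma>" and ?L = "other_cell Msh Fc (cellA Msh Fc \<sigma>) \<sigma>"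
  have KL: "?K \<in> Msh" "?L \<in> Msh" "?K \<noteq> ?L" "\<sigma> \<in> Fc ?K" "\<sigma> \<in> Fc ?L"
    using int_face_cells[OF mesh \<sigma>] by (auto simp: set_eq_iff)
  have "?K \<inter> ?L \<noteq> {}"
    using polytopal_mesh_face(1,2)[OF mesh KL(1,4)] polytopal_mesh_face(1)[OF mesh KL(2,5)] by blast
  from abs_upwind_flux_le[OF M \<rho>[OF KL(1)] \<rho>[OF KL(2)] u[OF KL(1,4)]
      less_imp_le[OF polytopal_mesh_face(3)[OF mesh KL(1,4)]] \<Psi>[OF KL(1,2) this] upwind[OF KL]]
  show ?thesis unfolding face_flux_def Let_def .
qed

lemma abs_sum_dRm_mult_le:
  assumes mesh: "polytopal_mesh \<Omega> Msh Fc fmeas" and M: "1 < M"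
    and \<rho>: "\<And>K. K \<in> Msh \<Longrightarrow> \<rho> K n \<in> {1/M..M}"
    and anti: "\<And>K L \<sigma>. K \<in> Msh \<Longrightarrow> L \<in> Msh \<Longrightarrow> K \<noteq> L \<Longrightarrow> \<sigma> \<in> Fc K \<Longrightarrow> \<sigma> \<in> Fc L
        \<Longrightarrow> u L \<sigma> n = - u K \<sigma> n"
    and u: "\<And>K \<sigma>. K \<in> Msh \<Longrightarrow> \<sigma> \<in> Fc K \<Longrightarrow> \<bar>u K \<sigma> n\<bar> \<le> M"
    and upwind: "\<And>K L \<sigma>. K \<in> Msh \<Longrightarrow> L \<in> Msh \<Longrightarrow> K \<noteq> L \<Longrightarrow> \<sigma> \<in> Fc K \<Longrightarrow> \<sigma> \<in> Fc L \<Longrightarrow>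
        if 0 \<le> u K \<sigma> n then \<rho>s \<sigma> n \<in> bracket_int (\<rho> K n) (xKL phi_rho (\<rho> K n) (\<rho> L n))
        else \<rho>s \<sigma> n \<in> bracket_int (\<rho> L n) (xKL phi_rho (\<rho> K n) (\<rho> L n))"
    and \<Psi>: "\<And>K L. K \<in> Msh \<Longrightarrow> L \<in> Msh \<Longrightarrow> K \<inter> L \<noteq> {} \<Longrightarrow> \<bar>\<Psi> K - \<Psi> L\<bar> \<le> W"
  shows "\<bar>\<Sum>K\<in>Msh. measure lebesgue K * dRm Msh Fc fmeas \<rho> \<rho>s u K n * \<Psi> K\<bar>
    \<le> M * (1 + ln M) * W * (\<Sum>\<sigma>\<in>int_faces Msh Fc.
        fmeas \<sigma> * \<bar>\<rho> (other_cell Msh Fc (cellA Msh Fc \<sigma>) \<sigma>) n - \<rho> (cellA Msh Fc \<sigma>) n\<bar>)"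
proof -
  have pos: "0 < \<rho> K n" if "K \<in> Msh" for K using inv_interval_abs_ln_le(1)[OF M \<rho>[OF that]] .
  have "\<bar>\<Sum>K\<in>Msh. measure lebesgue K * dRm Msh Fc fmeas \<rho> \<rho>s u K n * \<Psi> K\<bar>
      \<le> (\<Sum>\<sigma>\<in>int_faces Msh Fc. \<bar>face_flux Msh Fc fmeas \<rho> \<rho>s u \<Psi> \<sigma> n\<bar>)"
  proof -
    have "(\<Sum>K\<in>Msh. measure lebesgue K * dRm Msh Fc fmeas \<rho> \<rho>s u K n * \<Psi> K)
        = (\<Sum>\<sigma>\<in>int_faces Msh Fc. face_flux Msh Fc fmeas \<rho> \<rho>s u \<Psi> \<sigma> n)"
      using sum_dRm_mult_eq[OF mesh, where \<rho> = \<rho> and n = n and u = u and \<rho>s = \<rho>s and \<Psi> = \<Psi>]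
        pos anti by blast
    then show ?thesis by (simp add: sum_abs)
  qed
  also have "\<dots> \<le> (\<Sum>\<sigma>\<in>int_faces Msh Fc. M * (1 + ln M) * W
      * (fmeas \<sigma> * \<bar>\<rho> (other_cell Msh Fc (cellA Msh Fc \<sigma>) \<sigma>) n - \<rho> (cellA Msh Fc \<sigma>) n\<bar>))"
  proof (intro sum_mono)
    fix \<sigma> assume \<sigma>: "\<sigma> \<in> int_faces Msh Fc"
    show "\<bar>face_flux Msh Fc fmeas \<rho> \<rho>s u \<Psi> \<sigma> n\<bar> \<le> M * (1 + ln M) * W
        * (fmeas \<sigma> * \<bar>\<rho> (other_cell Msh Fc (cellA Msh Fc \<sigma>) \<sigma>) n - \<rho> (cellA Msh Fc \<sigma>) n\<bar>)"
      using abs_face_flux_le[OF mesh \<sigma> M, where \<rho> = \<rho> and n = n and u = u and \<rho>s = \<rho>s and \<Psi> = \<Psi>]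
        \<rho> u upwind \<Psi> by blast
  qed
  finally show ?thesis by (simp add: sum_distrib_left)
qed

lemma norm_BV_nonneg:
  assumes mesh: "polytopal_mesh \<Omega> Msh Fc fmeas" and "0 \<le> T"
  shows "0 \<le> norm_BV Msh Fc fmeas T N I \<rho>"
  unfolding norm_BV_def using assms polytopal_mesh_face(3)[OF mesh] int_face_cells[OF mesh]
  by (intro sum_nonneg mult_nonneg_nonneg) (auto simp: int_faces_def less_imp_le)

lemma abs_sum_time_le_norm_BV:
  assumes mesh: "polytopal_mesh \<Omega> Msh Fc fmeas" and T: "0 \<le> T" and C: "0 \<le> C"
    and bound: "\<And>n. n \<in> {1..N} \<Longrightarrow> \<bar>S n\<bar> \<le> C * (\<Sum>\<sigma>\<in>int_faces Msh Fc.
        fmeas \<sigma> * \<bar>\<rho> (other_cell Msh Fc (cellA Msh Fc \<sigma>) \<sigma>) n - \<rho> (cellA Msh Fc \<sigma>) n\<bar>)"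
  shows "\<bar>\<Sum>n\<in>{1..N}. T / real N * S n\<bar> \<le> C * norm_BV Msh Fc fmeas T N {0..N} \<rho>"
proof -
  define w where "w n = T / real N * (\<Sum>\<sigma>\<in>int_faces Msh Fc.
      fmeas \<sigma> * \<bar>\<rho> (other_cell Msh Fc (cellA Msh Fc \<sigma>) \<sigma>) n - \<rho> (cellA Msh Fc \<sigma>) n\<bar>)" for n
  have dt: "0 \<le> T / real N" using T by simp
  have w: "0 \<le> w n" for n
    using norm_BV_nonneg[OF mesh T, of N "{n}" \<rho>] unfolding w_def norm_BV_def by simp
  have "\<bar>\<Sum>n\<in>{1..N}. T / real N * S n\<bar> \<le> (\<Sum>n\<in>{1..N}. T / real N * \<bar>S n\<bar>)"
    using T by (intro order_trans[OF sum_abs] sum_mono) (simp add: abs_mult)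
  also have "\<dots> \<le> (\<Sum>n\<in>{1..N}. C * w n)"
  proof (intro sum_mono)
    fix n assume "n \<in> {1..N}"
    from mult_left_mono[OF bound[OF this] dt]
    show "T / real N * \<bar>S n\<bar> \<le> C * w n" unfolding w_def by (simp add: algebra_simps)
  qed
  also have "\<dots> \<le> C * (\<Sum>n\<in>{0..N}. w n)"
    unfolding sum_distrib_left[symmetric] using C w by (intro mult_left_mono sum_mono2) auto
  also have "\<dots> = C * norm_BV Msh Fc fmeas T N {0..N} \<rho>" unfolding w_def norm_BV_def ..
  finally show ?thesis .
qed

lemma test_fun_mass_center_diff_le:
  fixes \<psi> :: "'a::euclidean_space \<times> real \<Rightarrow> real"
  assumes mesh: "polytopal_mesh \<Omega> Msh Fc fmeas" and tf: "test_fun \<Omega> T \<psi>"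
    and K: "K \<in> Msh" and L: "L \<in> Msh" and y: "y \<in> K \<inter> L" and t: "0 < t" "t \<le> T"
  shows "\<bar>\<psi> (mass_center K, t) - \<psi> (mass_center L, t)\<bar> \<le> 2 * grad_sup \<Omega> T \<psi> * mesh_size Msh"
proof -
  have G: "0 \<le> grad_sup \<Omega> T \<psi>"
    using tf polytopal_meshD(1)[OF mesh] polytopal_mesh_cell(3)[OF mesh K] y t
    unfolding test_fun_def by (intro grad_sup_nonneg[of \<psi> \<Omega> y]) auto
  have "\<bar>\<psi> (mass_center X, t) - \<psi> (y, t)\<bar> \<le> grad_sup \<Omega> T \<psi> * mesh_size Msh"
    if X: "X \<in> Msh" "y \<in> X" for X
  proof -
    note cell = polytopal_mesh_cell[OF mesh X(1)]
    have "closed_segment (mass_center X) y \<subseteq> closure \<Omega>"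
      using closed_segment_subset[OF cell(5) X(2) cell(2)] cell(3) by blast
    then have "\<bar>\<psi> (mass_center X, t) - \<psi> (y, t)\<bar> \<le> grad_sup \<Omega> T \<psi> * norm (mass_center X - y)"
      using tf polytopal_meshD(1)[OF mesh] t by (intro test_fun_diff_le) auto
    moreover have "norm (mass_center X - y) \<le> diameter X"
      using diameter_bounded_bound[OF compact_imp_bounded[OF cell(1)] cell(5) X(2)]
      by (simp add: dist_norm)
    ultimately show ?thesis using cell(6) G by (smt (verit) mult_left_mono)
  qed
  from this[OF K] this[OF L] show ?thesis using y by auto
qed

lemma norm_m11_le_norm_BV:
  assumes mesh: "polytopal_mesh \<Omega> Msh Fc fmeas" and T: "0 < T" and C: "0 \<le> C"
    and bound: "\<And>\<psi> n. test_fun \<Omega> T \<psi> \<Longrightarrow> n \<in> {1..N} \<Longrightarrow>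
      \<bar>\<Sum>K\<in>Msh. measure lebesgue K * z K n * \<psi> (mass_center K, real n * (T / real N))\<bar>
      \<le> C * grad_sup \<Omega> T \<psi> * (\<Sum>\<sigma>\<in>int_faces Msh Fc.
          fmeas \<sigma> * \<bar>\<rho> (other_cell Msh Fc (cellA Msh Fc \<sigma>) \<sigma>) n - \<rho> (cellA Msh Fc \<sigma>) n\<bar>)"
  shows "norm_m11 \<Omega> Msh T N {1..N} z \<le> ereal (C * norm_BV Msh Fc fmeas T N {0..N} \<rho>)"
  unfolding norm_m11_def
proof (intro SUP_least, clarify)
  fix \<psi> assume \<psi>: "test_fun \<Omega> T \<psi>" and G: "grad_sup \<Omega> T \<psi> \<noteq> 0"
  obtain K where "K \<in> Msh" using polytopal_meshD(3)[OF mesh] by blast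
  then have "mass_center K \<in> closure \<Omega>" using polytopal_mesh_cell(3,5)[OF mesh] by blast
  then have G: "0 < grad_sup \<Omega> T \<psi>"
    using \<psi> G grad_sup_nonneg[OF _ polytopal_meshD(1)[OF mesh] _ T] unfolding test_fun_def
    by fastforce
  have "\<bar>\<Sum>n\<in>{1..N}. T / real N * (\<Sum>K\<in>Msh. measure lebesgue K * z K n
      * \<psi> (mass_center K, real n * (T / real N)))\<bar>
      \<le> C * grad_sup \<Omega> T \<psi> * norm_BV Msh Fc fmeas T N {0..N} \<rho>"
    using T C G bound[OF \<psi>] by (intro abs_sum_time_le_norm_BV[OF mesh]) auto
  then show "ereal ((\<Sum>n\<in>{1..N}. T / real N * (\<Sum>K\<in>Msh. measure lebesgue K * z K n
      * \<psi> (mass_center K, real n * (T / real N)))) / grad_sup \<Omega> T \<psi>)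
      \<le> ereal (C * norm_BV Msh Fc fmeas T N {0..N} \<rho>)"
    using G by (simp add: pos_divide_le_eq algebra_simps)
qed

theorem lemma2p7:
  fixes \<Omega> :: "'a::euclidean_space set"
    and Msh :: "'a set set" and Fc :: "'a set \<Rightarrow> 'a set set" and fmeas :: "'a set \<Rightarrow> real"
    and T M :: real and N :: nat
    and \<rho> :: "'a set \<Rightarrow> nat \<Rightarrow> real" and \<rho>s :: "'a set \<Rightarrow> nat \<Rightarrow> real"
    and u :: "'a set \<Rightarrow> 'a set \<Rightarrow> nat \<Rightarrow> real"
  assumes mesh: "polytopal_mesh \<Omega> Msh Fc fmeas"
    and T: "T > 0" and N: "N \<ge> 1"
    and u_antisym: "\<And>K L \<sigma> n. K \<in> Msh \<Longrightarrow> L \<in> Msh \<Longrightarrow> K \<noteq> L \<Longrightarrow> \<sigma> \<in> Fc K \<Longrightarrow> \<sigma> \<in> Fc L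
        \<Longrightarrow> n \<le> N \<Longrightarrow> u L \<sigma> n = - u K \<sigma> n"
    and u_bdry: "\<And>K \<sigma> n. K \<in> Msh \<Longrightarrow> \<sigma> \<in> Fc K \<Longrightarrow> \<sigma> \<notin> int_faces Msh Fc \<Longrightarrow> n \<le> N
        \<Longrightarrow> u K \<sigma> n = 0"
    and rho_pos: "\<And>K n. K \<in> Msh \<Longrightarrow> n \<le> N \<Longrightarrow> \<rho> K n > 0"
    and face_val: "\<And>K L \<sigma> n. K \<in> Msh \<Longrightarrow> L \<in> Msh \<Longrightarrow> K \<noteq> L \<Longrightarrow> \<sigma> \<in> Fc K \<Longrightarrow> \<sigma> \<in> Fc L
        \<Longrightarrow> n < N \<Longrightarrow>
        (if u K \<sigma> (n+1) \<ge> 0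
         then \<rho>s \<sigma> (n+1) \<in> bracket_int (\<rho> K (n+1)) (xKL phi_rho (\<rho> K (n+1)) (\<rho> L (n+1)))
         else \<rho>s \<sigma> (n+1) \<in> bracket_int (\<rho> L (n+1)) (xKL phi_rho (\<rho> K (n+1)) (\<rho> L (n+1))))"
    and M: "M > 1"
    and rho_le: "\<And>K n. K \<in> Msh \<Longrightarrow> n \<le> N \<Longrightarrow> \<rho> K n \<le> M"
    and rho_inv_le: "\<And>K n. K \<in> Msh \<Longrightarrow> n \<le> N \<Longrightarrow> 1 / \<rho> K n \<le> M"
    and u_le: "\<And>K \<sigma> n. K \<in> Msh \<Longrightarrow> \<sigma> \<in> Fc K \<Longrightarrow> n \<le> N \<Longrightarrow> \<bar>u K \<sigma> n\<bar> \<le> M"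
  shows "norm_m11 \<Omega> Msh T N {1..N} (dRm Msh Fc fmeas \<rho> \<rho>s u)
    \<le> ereal (3 * M * (SUP z\<in>{1/M..M}. \<bar>deriv phi_rho z\<bar>)
             * norm_BV Msh Fc fmeas T N {0..N} \<rho> * mesh_size Msh)"
proof -
  have \<rho>: "\<rho> K n \<in> {1/M..M}" if "K \<in> Msh" "n \<le> N" for K n
    using rho_pos[OF that] rho_le[OF that] rho_inv_le[OF that] M by (simp add: field_simps)
  have "norm_m11 \<Omega> Msh T N {1..N} (dRm Msh Fc fmeas \<rho> \<rho>s u)
      \<le> ereal (2 * M * (1 + ln M) * mesh_size Msh * norm_BV Msh Fc fmeas T N {0..N} \<rho>)"
  proof (rule norm_m11_le_norm_BV[OF mesh T])
    fix \<psi> n assume \<psi>: "test_fun \<Omega> T \<psi>" and n: "n \<in> {1..N}"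
    have t: "0 < real n * (T / real N)" "real n * (T / real N) \<le> T"
      using n T by (auto simp: field_simps)
    have prev: "n - 1 < N" "n - 1 + 1 = n" using n by auto
    have "\<bar>\<Sum>K\<in>Msh. measure lebesgue K * dRm Msh Fc fmeas \<rho> \<rho>s u K n
          * \<psi> (mass_center K, real n * (T / real N))\<bar>
        \<le> M * (1 + ln M) * (2 * grad_sup \<Omega> T \<psi> * mesh_size Msh) * (\<Sum>\<sigma>\<in>int_faces Msh Fc.
          fmeas \<sigma> * \<bar>\<rho> (other_cell Msh Fc (cellA Msh Fc \<sigma>) \<sigma>) n - \<rho> (cellA Msh Fc \<sigma>) n\<bar>)"
    proof (rule abs_sum_dRm_mult_le[OF mesh M])
      show "\<rho> K n \<in> {1/M..M}" if "K \<in> Msh" for K using \<rho>[OF that] n by simp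
      show "\<bar>u K \<sigma> n\<bar> \<le> M" if "K \<in> Msh" "\<sigma> \<in> Fc K" for K \<sigma> using u_le[OF that] n by simp
      show "u L \<sigma> n = - u K \<sigma> n" if "K \<in> Msh" "L \<in> Msh" "K \<noteq> L" "\<sigma> \<in> Fc K" "\<sigma> \<in> Fc L" for K L \<sigma>
        using u_antisym[OF that] n by simp
      show "\<bar>\<psi> (mass_center K, real n * (T / real N)) - \<psi> (mass_center L, real n * (T / real N))\<bar>
          \<le> 2 * grad_sup \<Omega> T \<psi> * mesh_size Msh" if "K \<in> Msh" "L \<in> Msh" "K \<inter> L \<noteq> {}" for K L
        using that test_fun_mass_center_diff_le[OF mesh \<psi> _ _ _ t] by blast
    qed (rule face_val[OF _ _ _ _ _ prev(1), unfolded prev(2)])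
    then show "\<bar>\<Sum>K\<in>Msh. measure lebesgue K * dRm Msh Fc fmeas \<rho> \<rho>s u K n
        * \<psi> (mass_center K, real n * (T / real N))\<bar>
        \<le> 2 * M * (1 + ln M) * mesh_size Msh * grad_sup \<Omega> T \<psi> * (\<Sum>\<sigma>\<in>int_faces Msh Fc.
          fmeas \<sigma> * \<bar>\<rho> (other_cell Msh Fc (cellA Msh Fc \<sigma>) \<sigma>) n - \<rho> (cellA Msh Fc \<sigma>) n\<bar>)"
      by (simp add: algebra_simps)
  qed (use M mesh_size_nonneg[OF mesh] in simp)
  also have "\<dots> \<le> ereal (3 * M * (SUP z\<in>{1/M..M}. \<bar>deriv phi_rho z\<bar>)
      * norm_BV Msh Fc fmeas T N {0..N} \<rho> * mesh_size Msh)"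
    using M mesh_size_nonneg[OF mesh] norm_BV_nonneg[OF mesh, of T N "{0..N}" \<rho>] T
    unfolding SUP_abs_deriv_phi_rho[OF M] by (simp add: mult_right_mono)
  finally show ?thesis .
qed

end
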